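(* Consider the $N$-node uplink system described in the context, let $\beta_1,\dots,\beta_N>0$, define the Lyapunov function $L(t)=\frac1N\sum_{i=1}^N\beta_iD_{t,i}$ and, for a given action $\bm{a}_t=(a_{t,1},\dots,a_{t,N})\in\{0,1\}^N$ with $\sum_i a_{t,i}\le1$, the Lyapunov drift $\Delta=\mathbb{E}[L(t+1)-L(t)\mid \bm{B}_t,\bm{a}_t]$, where $\bm{B}_t$ is the AP's current belief state (the destination AoIs $D_{t,i}$ together with the local-age beliefs $\bm{b}_{t,i}$). Let $G_{t,i}=D_{t,i}-\sum_{d\ge1}b_{t,i}(d)\,d$. Then the drift is minimized over all such actions by scheduling a node $i$ with maximal value of $\beta_ip_iG_{t,i}$.
   Context: System: $N$ nodes $i=1,\dots,N$ and one access point (AP); time slots $t=0,1,2,\dots$. Node $i$ receives a status update in each slot independently with probability $\lambda_i\in(0,1]$ and keeps only the latest one. Local age: $d_{t+1,i}=1$ if an update arrives at node $i$ in slot $t$, else $d_{t+1,i}=d_{t,i}+1$; always $D_{t,i}\ge d_{t,i}$. In each slot the AP schedules at most one node ($a_{t,i}=1$ iff node $i$ is scheduled); a scheduled node $i$'s transmission succeeds with probability $p_i\in(0,1]$ independently. If node $i$ is scheduled and succeeds in slot $t$, the AP observes $d_{t,i}$ and $D_{t+1,i}=d_{t,i}+1$; otherwise the AP observes nothing about $d_{t,i}$ and $D_{t+1,i}=D_{t,i}+1$. The belief $b_{t,i}(d)=\Pr(d_{t,i}=d\mid\text{AP history up to slot }t-1)$, and $D_{t,i}$ is known to the AP. *)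

theory Defs
  imports "HOL-Probability.Probability"
begin

text \<open>Nodes are indexed 0..N-1. An action is a predicate a :: nat => bool
  (a i = True iff node i is scheduled); admissible iff at most one node
  among 0..N-1 is scheduled.\<close>

definition admissible_action :: "nat \<Rightarrow> (nat \<Rightarrow> bool) \<Rightarrow> bool" where
  "admissible_action N a \<longleftrightarrow> (\<forall>i j. i < N \<longrightarrow> j < N \<longrightarrow> a i \<longrightarrow> a j \<longrightarrow> i = j)"

definition lyap :: "nat \<Rightarrow> (nat \<Rightarrow> real) \<Rightarrow> (nat \<Rightarrow> nat) \<Rightarrow> real" where
  "lyap N \<beta> D = (1 / real N) * (\<Sum>i<N. \<beta> i * real (D i))"

text \<open>For every node i, the current local age d_i is
  drawn from the belief b i and the transmission outcome s_i from
  Bernoulli(p i), independently; then D' i = d_i + 1 if node i is scheduled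
  and succeeds, and D' i = D i + 1 otherwise.\<close>
definition next_D :: "nat \<Rightarrow> (nat \<Rightarrow> nat) \<Rightarrow> (nat \<Rightarrow> nat pmf) \<Rightarrow> (nat \<Rightarrow> real)
    \<Rightarrow> (nat \<Rightarrow> bool) \<Rightarrow> (nat \<Rightarrow> nat) pmf" where
  "next_D N D b p a =
     map_pmf (\<lambda>ds i. if a i \<and> snd (ds i) then fst (ds i) + 1 else D i + 1)
       (Pi_pmf {..<N} (0, False) (\<lambda>i. pair_pmf (b i) (bernoulli_pmf (p i))))"

definition drift :: "nat \<Rightarrow> (nat \<Rightarrow> real) \<Rightarrow> (nat \<Rightarrow> real) \<Rightarrow> (nat \<Rightarrow> nat)
    \<Rightarrow> (nat \<Rightarrow> nat pmf) \<Rightarrow> (nat \<Rightarrow> bool) \<Rightarrow> real" where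
  "drift N \<beta> p D b a =
     measure_pmf.expectation (next_D N D b p a) (\<lambda>D'. lyap N \<beta> D' - lyap N \<beta> D)"

definition Gval :: "(nat \<Rightarrow> nat) \<Rightarrow> (nat \<Rightarrow> nat pmf) \<Rightarrow> nat \<Rightarrow> real" where
  "Gval D b i = real (D i) - measure_pmf.expectation (b i) real"

end

theory Submission
  imports Defs
begin

text \<open>Only the scheduled node can change its expected next AoI: if node i is scheduled, it
  succeeds with probability p i and then its destination AoI drops from D i + 1 to
  d i + 1, so E[D' i] = D i + 1 - p i * G i, while every other node just ages by one.
  Hence the drift is an affine function of the action,
  (1/N) * (\<Sum>i \<beta> i - \<Sum>scheduled i \<beta> i * p i * G i), and since G i \<ge> 0
  (the local age never exceeds D i) it is minimised by scheduling a maximiser of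
  \<beta> i * p i * G i.\<close>

lemma expectation_pair_bernoulli_pmf:
  fixes h :: "'a \<times> bool \<Rightarrow> real"
  assumes fin: "finite (set_pmf B)" and q: "0 \<le> q" "q \<le> 1"
  shows "measure_pmf.expectation (pair_pmf B (bernoulli_pmf q)) h =
         measure_pmf.expectation B (\<lambda>x. q * h (x, True) + (1 - q) * h (x, False))"
proof -
  have "pair_pmf B (bernoulli_pmf q) = B \<bind> (\<lambda>x. map_pmf (Pair x) (bernoulli_pmf q))"
    by (simp add: pair_pmf_def map_pmf_def)
  then have "measure_pmf.expectation (pair_pmf B (bernoulli_pmf q)) h =
      (\<Sum>x\<in>set_pmf B. pmf B x * measure_pmf.expectation (bernoulli_pmf q) (\<lambda>s. h (x, s)))"
    using fin by (simp add: pmf_expectation_bind[where A = "set_pmf B"])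
  also have "\<dots> = measure_pmf.expectation B (\<lambda>x. q * h (x, True) + (1 - q) * h (x, False))"
    using fin q by (subst integral_measure_pmf[where A = "set_pmf B"]) (auto simp: mult.commute)
  finally show ?thesis .
qed

lemma expectation_next_age:
  assumes fin: "finite (set_pmf B)" and q: "0 \<le> q" "q \<le> 1"
  shows "measure_pmf.expectation (pair_pmf B (bernoulli_pmf q))
           (\<lambda>z. real (if c \<and> snd z then fst z + 1 else d + 1))
         = real d + 1 - (if c then q * (real d - measure_pmf.expectation B real) else 0)"
proof (cases c)
  case True
  have int: "integrable B f" for f :: "nat \<Rightarrow> real"
    using fin by (rule integrable_measure_pmf_finite)
  have "measure_pmf.expectation (pair_pmf B (bernoulli_pmf q))
          (\<lambda>z. real (if c \<and> snd z then fst z + 1 else d + 1))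
      = measure_pmf.expectation B (\<lambda>x. q * real x + (q + (1 - q) * (real d + 1)))"
    using True fin q by (simp add: expectation_pair_bernoulli_pmf algebra_simps)
  also have "\<dots> = q * measure_pmf.expectation B real + (q + (1 - q) * (real d + 1))"
    by (simp add: int)
  finally show ?thesis
    using True by (simp add: algebra_simps)
qed simp

lemma finite_set_pmf_next_D:
  assumes "\<And>i. i < N \<Longrightarrow> finite (set_pmf (b i))"
  shows "finite (set_pmf (next_D N D b p a))"
  using assms unfolding next_D_def
  by (subst set_map_pmf, subst set_Pi_pmf) (auto intro!: finite_PiE_dflt)

lemma expectation_next_D_component:
  assumes p_range: "\<And>i. i < N \<Longrightarrow> 0 \<le> p i \<and> p i \<le> 1"
    and fin: "\<And>i. i < N \<Longrightarrow> finite (set_pmf (b i))"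
    and i: "i < N"
  shows "measure_pmf.expectation (next_D N D b p a) (\<lambda>D'. real (D' i))
         = real (D i) + 1 - (if a i then p i * Gval D b i else 0)"
proof -
  let ?M = "Pi_pmf {..<N} (0, False) (\<lambda>i. pair_pmf (b i) (bernoulli_pmf (p i)))"
  have "measure_pmf.expectation (next_D N D b p a) (\<lambda>D'. real (D' i))
      = measure_pmf.expectation (map_pmf (\<lambda>ds. ds i) ?M)
          (\<lambda>z. real (if a i \<and> snd z then fst z + 1 else D i + 1))"
    by (simp add: next_D_def)
  also have "map_pmf (\<lambda>ds. ds i) ?M = pair_pmf (b i) (bernoulli_pmf (p i))"
    using i by (subst Pi_pmf_component) auto
  finally show ?thesis
    using expectation_next_age[OF fin[OF i]] p_range[OF i] by (simp add: Gval_def)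
qed

lemma drift_eq:
  assumes p_range: "\<And>i. i < N \<Longrightarrow> 0 \<le> p i \<and> p i \<le> 1"
    and fin: "\<And>i. i < N \<Longrightarrow> finite (set_pmf (b i))"
  shows "drift N \<beta> p D b a = (1 / real N) *
           ((\<Sum>i<N. \<beta> i) - (\<Sum>i<N. if a i then \<beta> i * p i * Gval D b i else 0))"
proof -
  let ?M = "next_D N D b p a"
  have int: "integrable ?M f" for f :: "_ \<Rightarrow> real"
    using finite_set_pmf_next_D[OF fin] by (rule integrable_measure_pmf_finite)
  have "drift N \<beta> p D b a =
      (1 / real N) * (\<Sum>i<N. \<beta> i * (measure_pmf.expectation ?M (\<lambda>D'. real (D' i)) - real (D i)))"
    by (simp add: drift_def lyap_def int right_diff_distrib sum_subtractf)
  also have "\<dots> = (1 / real N) * (\<Sum>i<N. \<beta> i - (if a i then \<beta> i * p i * Gval D b i else 0))"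
    using p_range fin
    by (intro arg_cong2[where f = times] sum.cong) (auto simp: expectation_next_D_component algebra_simps)
  finally show ?thesis
    by (simp add: sum_subtractf)
qed

lemma Gval_nonneg:
  assumes "set_pmf (b i) \<subseteq> {..D i}"
  shows "0 \<le> Gval D b i"
proof -
  have "finite (set_pmf (b i))"
    using assms finite_subset by blast
  then have "measure_pmf.expectation (b i) real \<le> real (D i)"
    using assms by (intro measure_pmf.integral_le_const integrable_measure_pmf_finite)
                   (auto simp: AE_measure_pmf_iff)
  then show ?thesis
    by (simp add: Gval_def)
qed

lemma sum_admissible_action_le:
  fixes h :: "nat \<Rightarrow> real"
  assumes adm: "admissible_action N a"
    and max: "\<And>i. i < N \<Longrightarrow> h i \<le> m" and m: "0 \<le> m"
  shows "(\<Sum>i<N. if a i then h i else 0) \<le> m"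
proof (cases "\<exists>j<N. a j")
  case True
  then obtain j where j: "j < N" "a j" by blast
  have "(\<Sum>i<N. if a i then h i else 0) = (\<Sum>i<N. if i = j then h i else 0)"
    using adm j unfolding admissible_action_def by (intro sum.cong) auto
  then show ?thesis
    using j max by simp
next
  case False
  then show ?thesis
    using m by (simp add: sum.neutral)
qed

theorem proposition2:
  fixes N :: nat and \<beta> p :: "nat \<Rightarrow> real" and D :: "nat \<Rightarrow> nat"
    and b :: "nat \<Rightarrow> nat pmf" and i0 :: nat
  assumes beta_pos: "\<And>i. i < N \<Longrightarrow> \<beta> i > 0"
    and p_range: "\<And>i. i < N \<Longrightarrow> 0 < p i \<and> p i \<le> 1"
    and belief_support: "\<And>i. i < N \<Longrightarrow> set_pmf (b i) \<subseteq> {1..D i}"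
    and i0: "i0 < N"
    and i0_max: "\<And>i. i < N \<Longrightarrow> \<beta> i * p i * Gval D b i \<le> \<beta> i0 * p i0 * Gval D b i0"
  shows "\<forall>a. admissible_action N a \<longrightarrow>
           drift N \<beta> p D b (\<lambda>j. j = i0) \<le> drift N \<beta> p D b a"
proof (intro allI impI)
  fix a assume adm: "admissible_action N a"
  define h where "h i = \<beta> i * p i * Gval D b i" for i
  have p01: "\<And>i. i < N \<Longrightarrow> 0 \<le> p i \<and> p i \<le> 1"
    using p_range by fastforce
  have fin: "\<And>i. i < N \<Longrightarrow> finite (set_pmf (b i))"
    using belief_support finite_subset by blast
  have "0 \<le> Gval D b i0"
    using belief_support[OF i0] by (intro Gval_nonneg) auto
  then have "0 \<le> h i0"
    using beta_pos[OF i0] p_range[OF i0] by (simp add: h_def)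
  then have "(\<Sum>i<N. if a i then h i else 0) \<le> h i0"
    using sum_admissible_action_le[OF adm] i0_max by (simp add: h_def)
  then show "drift N \<beta> p D b (\<lambda>j. j = i0) \<le> drift N \<beta> p D b a"
    using drift_eq[OF p01 fin] i0 unfolding h_def
    by (simp add: divide_right_mono)
qed

end
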